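(* Let $r,\sigma,s,c,\lambda,a,q,d,\gamma,b>0$ with $a<\lambda$, $b<\gamma$, $1-\lambda r>0$, $1-br>0$, and $\theta=\sqrt{2r/\sigma^2}$. For $w>1$ let $$G(w)=\frac{(1-\lambda r)\big((\ln w-1)w^2+\ln w+1\big)-cr\theta(w^2+1)}{\theta(1-ar)(w-1)^2}+\frac{s}{1-ar}-\frac{q}{1-br}-\frac{w+1}{\theta(w-1)}-\frac{2\big(\theta rd-(1-\gamma r)\ln w\big)w}{\theta(1-br)(w-1)^2}.$$ Assume there exists $\hat w>1$ with $G(\hat w)=0$ and $$(1-\lambda r)(\hat w-\hat w\ln\hat w-1)+cr\theta\hat w>0.$$ Let $\bar x_2=\frac{q}{1-br}+\frac{\hat w+1}{\theta(\hat w-1)}+\frac{2(\theta rd-(1-\gamma r)\ln\hat w)\hat w}{\theta(1-br)(\hat w-1)^2}$, $\bar x_1=\bar x_2-\frac{\ln\hat w}{\theta}$, $$C_{11}=\frac{e^{-\theta\bar x_1}}{2}\Big[(a-\lambda)\bar x_2-\Big(\bar x_1+\frac1\theta\Big)\frac{1-\lambda r}{r}-c+\frac sr\Big],\quad C_{12}=\frac{e^{\theta\bar x_1}}{2}\Big[(a-\lambda)\bar x_2-\Big(\bar x_1-\frac1\theta\Big)\frac{1-\lambda r}{r}-c+\frac sr\Big],$$ $\varphi_1(x)=C_{11}e^{\theta x}+C_{12}e^{-\theta x}+\frac{x-s}{r}$, and $$W_1(x)=\begin{cases}ax & x\ge\bar x_2\\ \varphi_1(x)&\bar x_1<x<\bar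 x_2\\ a\bar x_2-c-\lambda(\bar x_2-x)&x\le\bar x_1.\end{cases}$$ For $x\in\mathbb{R}$ let $\mathcal{M}W_1(x)=\sup_{\delta\ge0}\{W_1(x+\delta)-c-\lambda\delta\}$. Then for each $x$ the maximizer over $\delta\ge0$ of $W_1(x+\delta)-c-\lambda\delta$ is unique and equals $\delta(x)=(\bar x_2-x)\mathbf{1}_{(-\infty,\bar x_2]}(x)$, and $$\{\mathcal{M}W_1-W_1<0\}=(\bar x_1,\infty),\qquad\{\mathcal{M}W_1-W_1=0\}=(-\infty,\bar x_1].$$
   Context: This is the candidate equilibrium payoff of player P1 in the second type of Nash equilibrium (P1 forces P2 to stop) of a linear impulse controller–stopper game: state $X_t=x+\sigma W_t+\sum_{\tau_n\le t}\delta_n$, P1 pays $c+\lambda|\delta|$ per impulse $\delta\ge0$, receives running payoff $x-s$ and terminal payoff $ax$, discounted at rate $r$. *)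

theory Defs
  imports Complex_Main
begin

text \<open>Parameters: r, s, c, lam (= lambda), a, q, d, gam (= gamma), b; th stands for
  theta = sqrt(2 r / sigma^2).\<close>

definition Gfun :: "real \<Rightarrow> real \<Rightarrow> real \<Rightarrow> real \<Rightarrow> real \<Rightarrow> real \<Rightarrow> real \<Rightarrow> real \<Rightarrow> real \<Rightarrow> real \<Rightarrow> real \<Rightarrow> real" where
  "Gfun r th s c lam a q d gam b w =
     ((1 - lam*r) * ((ln w - 1) * w^2 + ln w + 1) - c*r*th*(w^2 + 1)) / (th*(1 - a*r)*(w - 1)^2)
     + s/(1 - a*r) - q/(1 - b*r) - (w + 1)/(th*(w - 1))
     - 2*(th*r*d - (1 - gam*r)*ln w)*w / (th*(1 - b*r)*(w - 1)^2)"

definition xbar2 :: "real \<Rightarrow> real \<Rightarrow> real \<Rightarrow> real \<Rightarrow> real \<Rightarrow> real \<Rightarrow> real \<Rightarrow> real" where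
  "xbar2 r th q d gam b w =
     q/(1 - b*r) + (w + 1)/(th*(w - 1)) + 2*(th*r*d - (1 - gam*r)*ln w)*w / (th*(1 - b*r)*(w - 1)^2)"

definition xbar1 :: "real \<Rightarrow> real \<Rightarrow> real \<Rightarrow> real \<Rightarrow> real \<Rightarrow> real \<Rightarrow> real \<Rightarrow> real" where
  "xbar1 r th q d gam b w = xbar2 r th q d gam b w - ln w / th"

definition C11 :: "real \<Rightarrow> real \<Rightarrow> real \<Rightarrow> real \<Rightarrow> real \<Rightarrow> real \<Rightarrow> real \<Rightarrow> real \<Rightarrow> real" where
  "C11 r th s c lam a x1 x2 =
     exp (- th*x1) / 2 * ((a - lam)*x2 - (x1 + 1/th)*((1 - lam*r)/r) - c + s/r)"

definition C12 :: "real \<Rightarrow> real \<Rightarrow> real \<Rightarrow> real \<Rightarrow> real \<Rightarrow> real \<Rightarrow> real \<Rightarrow> real \<Rightarrow> real" where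
  "C12 r th s c lam a x1 x2 =
     exp (th*x1) / 2 * ((a - lam)*x2 - (x1 - 1/th)*((1 - lam*r)/r) - c + s/r)"

definition phi1 :: "real \<Rightarrow> real \<Rightarrow> real \<Rightarrow> real \<Rightarrow> real \<Rightarrow> real \<Rightarrow> real \<Rightarrow> real \<Rightarrow> real \<Rightarrow> real" where
  "phi1 r th s c lam a x1 x2 x =
     C11 r th s c lam a x1 x2 * exp (th*x) + C12 r th s c lam a x1 x2 * exp (- th*x) + (x - s)/r"

definition W1 :: "real \<Rightarrow> real \<Rightarrow> real \<Rightarrow> real \<Rightarrow> real \<Rightarrow> real \<Rightarrow> real \<Rightarrow> real \<Rightarrow> real \<Rightarrow> real" where
  "W1 r th s c lam a x1 x2 x =
     (if x2 \<le> x then a*x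
      else if x1 < x then phi1 r th s c lam a x1 x2 x
      else a*x2 - c - lam*(x2 - x))"

definition Mop :: "(real \<Rightarrow> real) \<Rightarrow> real \<Rightarrow> real \<Rightarrow> real \<Rightarrow> real" where
  "Mop f c lam x = Sup ((\<lambda>\<delta>. f (x + \<delta>) - c - lam*\<delta>) ` {0..})"

end

theory Submission
  imports Defs
begin

text \<open>
  Put \<open>h y = W1 y - lam * y\<close>, so that \<open>W1 (x + \<delta>) - c - lam * \<delta> = h (x + \<delta>) + lam * x - c\<close>:
  an optimal impulse moves \<open>x\<close> to a maximiser of \<open>h\<close> on \<open>[x, \<infinity>)\<close>. Left of \<open>x1\<close> the function
  \<open>h\<close> is constant, equal to \<open>h x2 - c\<close>, and right of \<open>x2\<close> it has slope \<open>a - lam < 0\<close>. In between,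
  with \<open>u = th * (y - x1)\<close>, the constants C11, C12 turn \<open>h\<close> into \<open>h x2 - c + g u\<close> with
  \<open>g u = P (cosh u - 1) - k (sinh u - u)\<close>, and the root condition \<open>G w = 0\<close> is exactly continuity of
  \<open>W1\<close> at \<open>x2\<close>, i.e. \<open>g (ln w) = c\<close>. The inequality hypothesis on \<open>w\<close> makes \<open>g\<close> strictly increasing on
  \<open>[0, ln w]\<close>. Hence \<open>h\<close> has a strict global maximum at \<open>x2\<close>, and
  \<open>M W1 x - W1 x = h (max x x2) - h x - c\<close> vanishes exactly for \<open>x \<le> x1\<close>.
\<close>

definition bump :: "real \<Rightarrow> real \<Rightarrow> real \<Rightarrow> real" where
  "bump P k u = P * (cosh u - 1) - k * (sinh u - u)"

definition bump_coeff :: "real \<Rightarrow> real \<Rightarrow> real \<Rightarrow> real" where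
  "bump_coeff c k w = (2*c*w + k*(w^2 - 1 - 2*ln w*w)) / (w-1)^2"

lemma bump_0 [simp]: "bump P k 0 = 0"
  by (simp add: bump_def)

lemma bump_has_real_derivative:
  "(bump P k has_real_derivative P * sinh u - k * (cosh u - 1)) (at u)"
  unfolding bump_def by (auto intro!: derivative_eq_intros)

lemma bump_derivative_exp:
  fixes P k u :: real
  shows "P * sinh u - k * (cosh u - 1) = (exp u - 1) * (P * (exp u + 1) - k * (exp u - 1)) / (2 * exp u)"
  by (simp add: sinh_field_def cosh_field_def exp_minus field_simps power2_eq_square)

lemma bump_coeff_pos:
  fixes w k c :: real
  assumes w: "w > 1" and k: "k > 0" and c: "c > 0"
    and hyp: "c*w + k*(w - w*ln w - 1) > 0"
  shows "bump_coeff c k w * (w+1) - k * (w-1) > 0" and "bump_coeff c k w > 0"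
proof -
  have "bump_coeff c k w * (w+1) - k*(w-1)
          = 2*w*((c*w + k*(w - w*ln w - 1)) + (c + k*(w-1-ln w))) / (w-1)^2"
    using w unfolding bump_coeff_def by (simp add: field_simps) (simp add: algebra_simps power2_eq_square)
  moreover have "c + k*(w-1-ln w) > 0"
    using c k ln_le_minus_one[of w] w by (simp add: add_pos_nonneg)
  ultimately show fw: "bump_coeff c k w * (w+1) - k * (w-1) > 0"
    using w hyp by simp
  have "k * (w-1) > 0"
    using k w by simp
  then have "bump_coeff c k w * (w+1) > 0"
    using fw by linarith
  then show "bump_coeff c k w > 0"
    using w by (simp add: zero_less_mult_iff)
qed

lemma bump_at_ln:
  fixes w k c :: real
  assumes w: "w > 1"
  shows "bump (bump_coeff c k w) k (ln w) = c"
  using w unfolding bump_def bump_coeff_def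
  by (simp add: sinh_ln_real cosh_ln_real field_simps) (simp add: algebra_simps power2_eq_square)

lemma bump_derivative_pos:
  fixes w k P u :: real
  assumes w: "w > 0" and P: "P > 0" and Pw: "P * (w+1) - k * (w-1) > 0"
    and u: "0 < u" "u \<le> ln w"
  shows "P * sinh u - k * (cosh u - 1) > 0"
proof -
  define t where "t = exp u"
  have t: "1 < t" "t \<le> w"
    using u ln_ge_iff[OF w, of u] by (auto simp: t_def)
  have "P * (t+1) - k * (t-1) = ((w-t) * (2*P) + (t-1) * (P * (w+1) - k * (w-1))) / (w-1)"
    using t by (simp add: field_simps)
  moreover have "(w-t) * (2*P) + (t-1) * (P * (w+1) - k * (w-1)) > 0"
    using t P Pw by (intro add_nonneg_pos mult_nonneg_nonneg mult_pos_pos) simp_all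
  ultimately have "P * (t+1) - k * (t-1) > 0"
    using t by simp
  then show ?thesis
    using t unfolding bump_derivative_exp t_def[symmetric] by simp
qed

lemma bump_strict_bounds:
  fixes w k c u :: real
  assumes w: "w > 1" and k: "k > 0" and c: "c > 0"
    and hyp: "c*w + k*(w - w*ln w - 1) > 0"
    and u: "0 < u" "u < ln w"
  shows "0 < bump (bump_coeff c k w) k u" and "bump (bump_coeff c k w) k u < c"
proof -
  define P where "P = bump_coeff c k w"
  note coeff = bump_coeff_pos[OF w k c hyp, folded P_def]
  have increasing: "bump P k x < bump P k y" if "0 \<le> x" "x < y" "y \<le> ln w" for x y
  proof (rule DERIV_pos_imp_increasing_open[OF \<open>x < y\<close>])
    show "\<exists>D. (bump P k has_real_derivative D) (at z) \<and> D > 0" if "x < z" "z < y" for z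
      using bump_has_real_derivative bump_derivative_pos[of w P k z] coeff w that \<open>0 \<le> x\<close> \<open>y \<le> ln w\<close>
      by force
    show "continuous_on {x..y} (bump P k)"
      using bump_has_real_derivative by (meson DERIV_isCont continuous_at_imp_continuous_on)
  qed
  show "0 < bump P k u"
    using increasing[of 0 u] u by simp
  show "bump P k u < c"
    using increasing[of u "ln w"] u bump_at_ln[OF w, of c k] by (simp add: P_def)
qed

lemma phi1_minus_linear:
  fixes r th s c lam a x1 x2 y :: real
  assumes th: "th > 0" and r: "r > 0"
  shows "phi1 r th s c lam a x1 x2 y - lam * y = (a - lam) * x2 - c
           + bump ((a - lam) * x2 - c - (x1 - s) / r + lam * x1) ((1 - lam * r) / (r * th)) (th * (y - x1))"
proof -
  define u where "u = th * (y - x1)"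
  have y: "y = x1 + u / th"
    using th by (simp add: u_def)
  have "exp (th * y) = exp (th * x1) * exp u" "exp (- th * y) = exp (- th * x1) * exp (- u)"
    by (simp_all add: u_def algebra_simps flip: exp_add)
  moreover have "exp (- th * x1) = 1 / exp (th * x1)"
    by (simp add: exp_minus inverse_eq_divide)
  ultimately show ?thesis
    unfolding phi1_def C11_def C12_def bump_def u_def[symmetric] sinh_field_def cosh_field_def
    using th r by (subst (2) y, subst y) (simp add: field_simps)
qed

lemma Gfun_root_bump_coeff:
  fixes r th s c lam a q d gam b w :: real
  assumes th: "th > 0" and r: "r > 0" and ar: "1 - a * r \<noteq> 0" and w: "w > 1"
    and G: "Gfun r th s c lam a q d gam b w = 0"
  defines "x1 \<equiv> xbar1 r th q d gam b w" and "x2 \<equiv> xbar2 r th q d gam b w"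
    and "k \<equiv> (1 - lam * r) / (r * th)"
  shows "(a - lam) * x2 - c - (x1 - s) / r + lam * x1 = bump_coeff c k w"
proof -
  define N where "N = (1 - lam*r) * ((ln w - 1) * w^2 + ln w + 1) - c*r*th*(w^2 + 1)"
  have w1: "(w-1)^2 \<noteq> 0"
    using w by simp
  have "Gfun r th s c lam a q d gam b w = N / (th * (1 - a*r) * (w-1)^2) + s / (1 - a*r) - x2"
    unfolding Gfun_def x2_def xbar2_def N_def by simp
  then have "x2 = N / (th * (1 - a*r) * (w-1)^2) + s / (1 - a*r)"
    using G by simp
  then have "(1 - a*r) * x2 = (1 - a*r) * (N / (th * (1 - a*r) * (w-1)^2)) + (1 - a*r) * (s / (1 - a*r))"
    by (simp only: distrib_left)
  also have "\<dots> = N / (th * (w-1)^2) + s"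
    using ar by simp
  finally have x2: "(1 - a*r) * x2 = N / (th * (w-1)^2) + s" .
  have x1: "x1 = x2 - ln w / th"
    by (simp add: x1_def x2_def xbar1_def)
  have "(a - lam) * x2 - c - (x1 - s) / r + lam * x1 = - ((1 - a*r) * x2) / r + s / r - c + k * ln w"
    unfolding x1 k_def using th r by (simp add: field_simps)
  also have "\<dots> = - (N / (r*th)) / (w-1)^2 - c + k * ln w"
    unfolding x2 using th r w1 by (simp add: field_simps)
  also have "N / (r*th) = k * ((ln w - 1) * w^2 + ln w + 1) - c * (w^2 + 1)"
    unfolding N_def k_def using th r by (simp add: field_simps)
  finally show ?thesis
    using w1 unfolding bump_coeff_def by (simp add: field_simps) (simp add: algebra_simps power2_eq_square)
qed

definition plateau_peak :: "(real \<Rightarrow> real) \<Rightarrow> real \<Rightarrow> real \<Rightarrow> real \<Rightarrow> bool" where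
  "plateau_peak h c x1 x2 \<longleftrightarrow> x1 < x2
     \<and> (\<forall>y \<le> x1. h y = h x2 - c)
     \<and> (\<forall>y. x1 < y \<and> y < x2 \<longrightarrow> h x2 - c < h y \<and> h y < h x2)
     \<and> (\<forall>y z. x2 \<le> y \<and> y < z \<longrightarrow> h z < h y)"

lemma plateau_peak_below:
  assumes "plateau_peak h c x1 x2" "c > 0" "y < x2"
  shows "h y < h x2"
  using assms unfolding plateau_peak_def by (cases "y \<le> x1") auto

lemma plateau_peak_unique_argmax:
  fixes V :: "real \<Rightarrow> real"
  assumes shape: "plateau_peak (\<lambda>y. V y - lam * y) c x1 x2" and c: "c > 0"
    and \<delta>: "\<delta> \<ge> 0" "\<delta> \<noteq> (if x \<le> x2 then x2 - x else 0)"
  shows "V (x + \<delta>) - c - lam * \<delta>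
           < V (x + (if x \<le> x2 then x2 - x else 0)) - c - lam * (if x \<le> x2 then x2 - x else 0)"
proof -
  define h where "h y = V y - lam * y" for y
  have fall: "h z < h y" if "x2 \<le> y" "y < z" for y z
    using shape that unfolding plateau_peak_def h_def by blast
  have less: "h (x + \<delta>) < h (max x x2)"
  proof (cases "x \<le> x2")
    case True
    then have "x + \<delta> \<noteq> x2"
      using \<delta> by auto
    then show ?thesis
      using True fall[of x2 "x + \<delta>"] plateau_peak_below[OF shape c, of "x + \<delta>"]
      by (cases "x + \<delta> < x2") (auto simp: h_def max_def)
  next
    case False
    then show ?thesis
      using \<delta> fall[of x "x + \<delta>"] by (simp add: max_def)
  qed
  then show ?thesis
    by (cases "x \<le> x2") (simp_all add: h_def max_def algebra_simps)
qed

lemma Mop_eq_at_argmax: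
  assumes "\<delta>\<^sub>0 \<ge> 0" and "\<And>\<delta>. \<delta> \<ge> 0 \<Longrightarrow> f (x + \<delta>) - c - lam * \<delta> \<le> f (x + \<delta>\<^sub>0) - c - lam * \<delta>\<^sub>0"
  shows "Mop f c lam x = f (x + \<delta>\<^sub>0) - c - lam * \<delta>\<^sub>0"
  unfolding Mop_def using assms by (intro cSup_eq_maximum) auto

lemma plateau_peak_intervention_regions:
  fixes V :: "real \<Rightarrow> real"
  assumes shape: "plateau_peak (\<lambda>y. V y - lam * y) c x1 x2" and c: "c > 0"
  shows "{x. Mop V c lam x - V x < 0} = {x1<..}" and "{x. Mop V c lam x - V x = 0} = {..x1}"
proof -
  define h where "h y = V y - lam * y" for y
  have gap: "Mop V c lam x - V x = h (max x x2) - h x - c" for x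
  proof -
    define \<delta>x where "\<delta>x = (if x \<le> x2 then x2 - x else 0)"
    have "V (x + \<delta>) - c - lam * \<delta> \<le> V (x + \<delta>x) - c - lam * \<delta>x" if "\<delta> \<ge> 0" for \<delta>
      using plateau_peak_unique_argmax[OF shape c that, where x = x] unfolding \<delta>x_def[symmetric]
      by (cases "\<delta> = \<delta>x") auto
    then have "Mop V c lam x = V (x + \<delta>x) - c - lam * \<delta>x"
      by (intro Mop_eq_at_argmax) (simp_all add: \<delta>x_def)
    moreover have "\<delta>x = max x x2 - x"
      by (simp add: \<delta>x_def)
    ultimately show ?thesis
      unfolding h_def by (simp add: algebra_simps)
  qed
  have zero: "Mop V c lam x - V x = 0" if "x \<le> x1" for x
    using shape that c unfolding gap plateau_peak_def h_def by (simp add: max_def)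
  have neg: "Mop V c lam x - V x < 0" if "x1 < x" for x
    using shape that c unfolding gap plateau_peak_def h_def
    by (cases "x < x2") (auto simp: max_def)
  show "{x. Mop V c lam x - V x < 0} = {x1<..}"
    using zero neg by (auto intro!: set_eqI) (metis less_irrefl not_le)
  show "{x. Mop V c lam x - V x = 0} = {..x1}"
    using zero neg by (auto intro!: set_eqI) (metis less_irrefl not_le)
qed

lemma W1_plateau_peak:
  fixes r th s c lam a x1 x2 w :: real
  defines "k \<equiv> (1 - lam * r) / (r * th)"
  assumes th: "th > 0" and r: "r > 0" and c: "c > 0" and w: "w > 1"
    and a: "a < lam" and lr: "1 - lam * r > 0"
    and x1: "x1 = x2 - ln w / th"
    and P: "(a - lam) * x2 - c - (x1 - s) / r + lam * x1 = bump_coeff c k w"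
    and hyp: "(1 - lam * r) * (w - w * ln w - 1) + c * r * th * w > 0"
  shows "plateau_peak (\<lambda>y. W1 r th s c lam a x1 x2 y - lam * y) c x1 x2"
proof -
  define h where "h y = W1 r th s c lam a x1 x2 y - lam * y" for y
  have x12: "x1 < x2"
    using x1 th w by simp
  have k: "k > 0"
    using th r lr by (simp add: k_def)
  have hyp': "c * w + k * (w - w * ln w - 1) > 0"
  proof -
    have "c * w + k * (w - w * ln w - 1) = ((1 - lam * r) * (w - w * ln w - 1) + c * r * th * w) / (r * th)"
      using th r by (simp add: k_def field_simps)
    then show ?thesis
      using hyp th r by simp
  qed
  have right: "h y = (a - lam) * y" if "x2 \<le> y" for y
    using that by (simp add: h_def W1_def algebra_simps)
  have plateau: "h y = h x2 - c" if "y \<le> x1" for y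
    using that x12 by (simp add: h_def W1_def algebra_simps)
  have middle: "h x2 - c < h y \<and> h y < h x2" if "x1 < y" "y < x2" for y
  proof -
    have "th * (y - x1) < th * (x2 - x1)"
      using that th by simp
    also have "th * (x2 - x1) = ln w"
      using x1 th by simp
    finally have u: "0 < th * (y - x1)" "th * (y - x1) < ln w"
      using that th by simp_all
    have "h y = h x2 - c + bump ((a - lam) * x2 - c - (x1 - s) / r + lam * x1) k (th * (y - x1))"
      using that x12 phi1_minus_linear[OF th r] by (simp add: h_def W1_def k_def left_diff_distrib)
    then show ?thesis
      using bump_strict_bounds[OF w k c hyp' u] P by simp
  qed
  have fall: "h z < h y" if "x2 \<le> y" "y < z" for y z
    using that a right by (simp add: mult_strict_left_mono_neg)
  show ?thesis
    using x12 plateau middle fall unfolding plateau_peak_def h_def by blast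
qed

theorem lemmaA3:
  fixes r \<sigma> s c lam a q d gam b th w :: real
  assumes pos: "r > 0" "\<sigma> > 0" "s > 0" "c > 0" "lam > 0" "a > 0" "q > 0" "d > 0" "gam > 0" "b > 0"
    and "a < lam" and "b < gam" and "1 - lam*r > 0" and "1 - b*r > 0"
    and th_def: "th = sqrt (2*r/\<sigma>^2)"
    and "w > 1" and "Gfun r th s c lam a q d gam b w = 0"
    and "(1 - lam*r)*(w - w*ln w - 1) + c*r*th*w > 0"
  shows "(\<forall>x. let x1 = xbar1 r th q d gam b w; x2 = xbar2 r th q d gam b w;
                 V = W1 r th s c lam a x1 x2;
                 \<delta>x = (if x \<le> x2 then x2 - x else 0)
             in \<delta>x \<ge> 0 \<and>
                (\<forall>\<delta>\<ge>0. \<delta> \<noteq> \<delta>x \<longrightarrow> V (x + \<delta>) - c - lam*\<delta> < V (x + \<delta>x) - c - lam*\<delta>x)) \<and>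
     {x. Mop (W1 r th s c lam a (xbar1 r th q d gam b w) (xbar2 r th q d gam b w)) c lam x
             - W1 r th s c lam a (xbar1 r th q d gam b w) (xbar2 r th q d gam b w) x < 0}
           = {xbar1 r th q d gam b w<..} \<and>
     {x. Mop (W1 r th s c lam a (xbar1 r th q d gam b w) (xbar2 r th q d gam b w)) c lam x
             - W1 r th s c lam a (xbar1 r th q d gam b w) (xbar2 r th q d gam b w) x = 0}
           = {..xbar1 r th q d gam b w}"
proof -
  define x1 where "x1 = xbar1 r th q d gam b w"
  define x2 where "x2 = xbar2 r th q d gam b w"
  have r: "r > 0" and c: "c > 0"
    using pos by simp_all
  have th: "th > 0"
    using th_def pos by simp
  have "a * r < lam * r"
    using \<open>a < lam\<close> r by simp
  then have ar: "1 - a * r \<noteq> 0"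
    using \<open>1 - lam * r > 0\<close> by linarith
  have shape: "plateau_peak (\<lambda>y. W1 r th s c lam a x1 x2 y - lam * y) c x1 x2"
  proof (rule W1_plateau_peak[OF th r c \<open>w > 1\<close> \<open>a < lam\<close> \<open>1 - lam * r > 0\<close>])
    show "x1 = x2 - ln w / th"
      by (simp add: x1_def x2_def xbar1_def)
    show "(a - lam) * x2 - c - (x1 - s) / r + lam * x1 = bump_coeff c ((1 - lam * r) / (r * th)) w"
      unfolding x1_def x2_def by (rule Gfun_root_bump_coeff) fact+
  qed fact
  show ?thesis
    unfolding x1_def[symmetric] x2_def[symmetric] Let_def
    using plateau_peak_unique_argmax[OF shape c] plateau_peak_intervention_regions[OF shape c]
    by simp
qed

end
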